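(* Let $\xi=e^{i\pi/5}$, $\tau=\frac{1+\sqrt5}{2}$. For $n\in\mathbb{N}$ let $L(n)=\{\sum_{j=0}^9 n_j\xi^j: n_j\in\mathbb{N}_0,\ \sum_j n_j\le n\}\cap\mathbb{R}$. Let $\mathbb{Z}[\tau]=\mathbb{Z}+\mathbb{Z}\tau$ and let $x\mapsto x'$ be the automorphism $a+b\sqrt5\mapsto a-b\sqrt5$ of $\mathbb{Q}[\sqrt5]$. For a bounded interval $\Omega$ let $\Sigma(\Omega)=\{x\in\mathbb{Z}[\tau]: x'\in\Omega\}$. Then $L(n)\subset\Sigma([-n,n])\cap[-n,n]$.
   Context: $\Sigma(\Omega)$ is the one-dimensional cut-and-project quasicrystal with acceptance window $\Omega$. *)

theory Defs
  imports Complex_Main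
begin

definition xi :: complex where "xi = exp (\<i> * of_real pi / 5)"

definition tau :: real where "tau = (1 + sqrt 5) / 2"

definition L :: "nat \<Rightarrow> real set" where
  "L n = {x. \<exists>c :: nat \<Rightarrow> nat. (\<Sum>j<10. c j) \<le> n \<and>
              complex_of_real x = (\<Sum>j<10. of_nat (c j) * xi ^ j)}"

definition Ztau :: "real set" where
  "Ztau = {x. \<exists>a b :: int. x = of_int a + of_int b * tau}"

definition qconj :: "real \<Rightarrow> real" where
  "qconj x = (THE y. \<exists>p q :: rat. x = of_rat p + of_rat q * sqrt 5 \<and>
                                   y = of_rat p - of_rat q * sqrt 5)"

definition Sigma_qc :: "real set \<Rightarrow> real set" where
  "Sigma_qc \<Omega> = {x \<in> Ztau. qconj x \<in> \<Omega>}"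

end

theory Submission
  imports Defs
begin

text \<open>Since \<open>\<xi>\<^sup>5 = -1\<close>, an element \<open>x\<close> of \<open>L(n)\<close> is \<open>\<Sum>\<^sub>j\<^sub><\<^sub>5 d\<^sub>j \<xi>\<^sup>j\<close> with
  integers \<open>d\<^sub>j = n\<^sub>j - n\<^sub>j\<^sub>+\<^sub>5\<close> and \<open>\<Sum> |d\<^sub>j| \<le> n\<close>. The imaginary parts of \<open>\<xi>, \<xi>\<^sup>2, \<xi>\<^sup>3, \<xi>\<^sup>4\<close>
  are \<open>s, \<tau>s, \<tau>s, s\<close> with \<open>s = sin(\<pi>/5) > 0\<close>, so, \<open>\<tau>\<close> being irrational, \<open>Im x = 0\<close> forces
  \<open>d\<^sub>4 = -d\<^sub>1\<close> and \<open>d\<^sub>3 = -d\<^sub>2\<close>. Reading off real parts then gives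
  \<open>x = d\<^sub>0 + d\<^sub>1\<tau> + d\<^sub>2(\<tau> - 1) \<in> \<int>[\<tau>]\<close> with \<open>|d\<^sub>0| + 2|d\<^sub>1| + 2|d\<^sub>2| \<le> n\<close>, and both \<open>x\<close> and
  \<open>x' = d\<^sub>0 + d\<^sub>1(1 - \<tau>) - d\<^sub>2\<tau>\<close> have coefficients of modulus at most \<open>2\<close>, hence lie in \<open>[-n, n]\<close>.\<close>

lemma sqrt_5_irrational: "sqrt 5 \<notin> \<rat>"
proof
  assume "sqrt 5 \<in> \<rat>"
  then obtain m n :: nat where n: "n \<noteq> 0" and mn: "\<bar>sqrt 5\<bar> = real m / real n"
    and coprime: "coprime m n"
    by (rule Rats_abs_nat_div_natE)
  have "real m = real n * sqrt 5"
    using mn n by (simp add: field_simps)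
  then have "real (m\<^sup>2) = real (5 * n\<^sup>2)"
    by (simp add: power_mult_distrib)
  then have m_sq: "m\<^sup>2 = 5 * n\<^sup>2"
    by (simp only: of_nat_eq_iff)
  have "coprime (m\<^sup>2) n"
    using coprime by simp
  moreover have "n dvd m\<^sup>2"
    using m_sq by simp
  ultimately have "is_unit n"
    by (simp only: coprime_absorb_right)
  with m_sq have "m\<^sup>2 = 5"
    by simp
  moreover have "m\<^sup>2 \<noteq> 5"
  proof (cases "m \<le> 2")
    case True
    then show ?thesis by (auto simp: le_Suc_eq numeral_eq_Suc)
  next
    case False
    then have "3\<^sup>2 \<le> m\<^sup>2" by (intro power_mono) auto
    then show ?thesis by auto
  qed
  ultimately show False
    by contradiction
qed

lemma rat_lincomb_irrational_eq_0:
  fixes x :: "'a::field_char_0"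
  assumes "x \<notin> \<rat>" "a \<in> \<rat>" "b \<in> \<rat>" "a + b * x = 0"
  shows "a = 0 \<and> b = 0"
proof (cases "b = 0")
  case True
  with assms show ?thesis by simp
next
  case False
  with assms(4) have "x = - a / b"
    by (simp add: field_simps add_eq_0_iff)
  with assms(1-3) show ?thesis
    by simp
qed

lemma tau_irrational: "tau \<notin> \<rat>"
proof
  assume "tau \<in> \<rat>"
  then have "2 * tau - 1 \<in> \<rat>" by simp
  moreover have "2 * tau - 1 = sqrt 5" by (simp add: tau_def field_simps)
  ultimately show False using sqrt_5_irrational by simp
qed

lemma qconj_of_rat_sqrt_5:
  "qconj (of_rat p + of_rat q * sqrt 5) = of_rat p - of_rat q * sqrt 5"
  unfolding qconj_def
proof (rule the_equality)
  fix y
  assume "\<exists>p' q'. of_rat p + of_rat q * sqrt 5 = of_rat p' + of_rat q' * sqrt 5 \<and>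
      y = of_rat p' - of_rat q' * sqrt 5"
  then obtain p' q' where eq: "of_rat p + of_rat q * sqrt 5 = of_rat p' + of_rat q' * sqrt 5"
    and y: "y = of_rat p' - of_rat q' * sqrt 5"
    by blast
  have "of_rat (p - p') + of_rat (q - q') * sqrt 5 = 0"
    using eq by (simp add: of_rat_diff algebra_simps)
  then have "of_rat (p - p') = (0::real) \<and> of_rat (q - q') = (0::real)"
    by (intro rat_lincomb_irrational_eq_0[OF sqrt_5_irrational]) simp_all
  then have "p = p' \<and> q = q'"
    by simp
  with y show "y = of_rat p - of_rat q * sqrt 5"
    by simp
qed blast

lemma tau_squared: "tau\<^sup>2 = tau + 1"
  by (simp add: tau_def power2_eq_square field_simps)

lemma tau_bounds: "1 < tau" "tau < 2"
proof -
  have "1 < sqrt 5" "sqrt 5 < 3"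
    by (simp_all add: real_less_rsqrt real_less_lsqrt)
  then show "1 < tau" "tau < 2"
    by (simp_all add: tau_def)
qed

lemma qconj_Ztau: "qconj (of_int a + of_int b * tau) = of_int a + of_int b * (1 - tau)"
proof -
  define p q where "p = of_int a + of_int b / (2::rat)" and "q = of_int b / (2::rat)"
  have "of_int a + of_int b * tau = of_rat p + of_rat q * sqrt 5"
    and "of_int a + of_int b * (1 - tau) = of_rat p - of_rat q * sqrt 5"
    by (simp_all add: p_def q_def tau_def of_rat_add of_rat_mult of_rat_divide field_simps)
  then show ?thesis
    by (simp add: qconj_of_rat_sqrt_5)
qed

lemma int_lincomb_tau_eq_0:
  assumes "of_int a + of_int b * tau = 0"
  shows "a = 0 \<and> b = 0"
  using rat_lincomb_irrational_eq_0[OF tau_irrational, of "of_int a" "of_int b"] assms by simp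

lemma cos_pi_div_5: "cos (pi / 5) = tau / 2"
proof -
  define c where "c = cos (pi / 5)"
  have c_pos: "c > 0"
    unfolding c_def using pi_gt_zero by (intro cos_gt_zero_pi) linarith+
  have "cos (3 * (pi / 5)) = cos (pi - 2 * (pi / 5))"
    by (simp add: field_simps)
  then have "4 * c ^ 3 - 3 * c = - (2 * c\<^sup>2 - 1)"
    unfolding c_def by (simp only: cos_treble_cos cos_pi_minus cos_double_cos)
  then have "(c + 1) * (4 * c\<^sup>2 - 2 * c - 1) = 0"
    by (simp add: algebra_simps power2_eq_square power3_eq_cube)
  with c_pos have "4 * c\<^sup>2 - 2 * c - 1 = 0"
    by simp
  then have "4 * ((c - tau / 2) * (c - (1 - tau) / 2)) = 0"
    using tau_squared by algebra
  moreover have "c - (1 - tau) / 2 \<noteq> 0"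
    using c_pos tau_bounds by simp
  ultimately show ?thesis
    unfolding c_def by simp
qed

lemma xi_power: "xi ^ k = cis (real k * pi / 5)"
proof -
  have "xi ^ k = cis (pi / 5) ^ k"
    by (simp add: xi_def cis_conv_exp mult.commute)
  also have "\<dots> = cis (real k * pi / 5)"
    by (simp add: DeMoivre)
  finally show ?thesis .
qed

lemma xi_power_5: "xi ^ 5 = -1"
  using xi_power[of 5] by (simp add: complex_eq_iff)

lemma Re_Im_xi_powers:
  "Re xi = tau / 2" "Im xi = sin (pi / 5)"
  "Re (xi ^ 2) = (tau - 1) / 2" "Im (xi ^ 2) = tau * sin (pi / 5)"
  "Re (xi ^ 3) = (1 - tau) / 2" "Im (xi ^ 3) = tau * sin (pi / 5)"
  "Re (xi ^ 4) = - tau / 2" "Im (xi ^ 4) = sin (pi / 5)"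
proof -
  have cos2: "cos (2 * pi / 5) = (tau - 1) / 2"
    using cos_double_cos[of "pi / 5"] by (simp add: cos_pi_div_5 tau_squared power_divide)
  have sin2: "sin (2 * pi / 5) = tau * sin (pi / 5)"
    using sin_double[of "pi / 5"] by (simp add: cos_pi_div_5)
  have pi_minus: "3 * pi / 5 = pi - 2 * pi / 5" "4 * pi / 5 = pi - pi / 5"
    by simp_all
  have cos3: "cos (3 * pi / 5) = (1 - tau) / 2"
    and sin3: "sin (3 * pi / 5) = tau * sin (pi / 5)"
    and cos4: "cos (4 * pi / 5) = - tau / 2"
    and sin4: "sin (4 * pi / 5) = sin (pi / 5)"
    unfolding pi_minus cos_pi_minus sin_pi_minus cos2 sin2 cos_pi_div_5 by (simp_all add: field_simps)
  have Re_Im: "Re (xi ^ k) = cos (real k * pi / 5)" "Im (xi ^ k) = sin (real k * pi / 5)" for k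
    by (simp_all add: xi_power)
  show "Re xi = tau / 2" "Im xi = sin (pi / 5)"
    "Re (xi ^ 2) = (tau - 1) / 2" "Im (xi ^ 2) = tau * sin (pi / 5)"
    "Re (xi ^ 3) = (1 - tau) / 2" "Im (xi ^ 3) = tau * sin (pi / 5)"
    "Re (xi ^ 4) = - tau / 2" "Im (xi ^ 4) = sin (pi / 5)"
    using Re_Im[of 1] Re_Im[of 2] Re_Im[of 3] Re_Im[of 4]
    by (simp_all add: cos_pi_div_5 cos2 sin2 cos3 sin3 cos4 sin4)
qed

lemma sum_lessThan_double:
  fixes f :: "nat \<Rightarrow> 'a::comm_monoid_add"
  shows "(\<Sum>j<2 * m. f j) = (\<Sum>j<m. f j + f (j + m))"
proof -
  have "(\<Sum>j<2 * m. f j) = (\<Sum>j<m. f j) + (\<Sum>j\<in>{m..<m + m}. f j)"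
    using sum.atLeastLessThan_concat[of 0 m "2 * m" f] by (simp add: atLeast0LessThan mult_2)
  also have "(\<Sum>j\<in>{m..<m + m}. f j) = (\<Sum>j<m. f (j + m))"
    using sum.shift_bounds_nat_ivl[of f 0 m m] by (simp add: atLeast0LessThan)
  finally show ?thesis
    by (simp add: sum.distrib)
qed

lemma sum_powers_antiperiodic:
  fixes w :: "'a::comm_ring_1"
  assumes "w ^ m = -1"
  shows "(\<Sum>j<2 * m. f j * w ^ j) = (\<Sum>j<m. (f j - f (j + m)) * w ^ j)"
  unfolding sum_lessThan_double by (simp add: power_add assms algebra_simps)

lemma sum_abs_diff_shift_le:
  fixes c :: "nat \<Rightarrow> nat"
  shows "(\<Sum>j<m. \<bar>int (c j) - int (c (j + m))\<bar>) \<le> int (\<Sum>j<2 * m. c j)"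
proof -
  have "(\<Sum>j<m. \<bar>int (c j) - int (c (j + m))\<bar>) \<le> (\<Sum>j<m. int (c j) + int (c (j + m)))"
    by (intro sum_mono) linarith
  also have "\<dots> = int (\<Sum>j<2 * m. c j)"
    by (simp add: sum_lessThan_double)
  finally show ?thesis .
qed

lemma real_int_combination_xi_powers:
  fixes d :: "nat \<Rightarrow> int"
  assumes x: "complex_of_real x = (\<Sum>j<5. of_int (d j) * xi ^ j)"
  shows "d 4 = - d 1" "d 3 = - d 2" "x = of_int (d 0) + of_int (d 1) * tau + of_int (d 2) * (tau - 1)"
proof -
  have "sin (pi / 5) > 0"
    by (rule sin_gt_zero) auto
  moreover have "0 = sin (pi / 5) * (of_int (d 1 + d 4) + of_int (d 2 + d 3) * tau)"
    using arg_cong[OF x, of Im]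
    by (simp add: lessThan_nat_numeral Re_Im_xi_powers algebra_simps)
  ultimately have "of_int (d 1 + d 4) + of_int (d 2 + d 3) * tau = 0"
    by simp
  then have "d 1 + d 4 = 0" "d 2 + d 3 = 0"
    using int_lincomb_tau_eq_0 by blast+
  then show d4: "d 4 = - d 1" and d3: "d 3 = - d 2"
    by simp_all
  have "x = of_int (d 0) + of_int (d 1) * (tau / 2) + of_int (d 2) * ((tau - 1) / 2)
      + of_int (d 3) * ((1 - tau) / 2) + of_int (d 4) * (- tau / 2)"
    using arg_cong[OF x, of Re]
    by (simp add: lessThan_nat_numeral Re_Im_xi_powers algebra_simps)
  then show "x = of_int (d 0) + of_int (d 1) * tau + of_int (d 2) * (tau - 1)"
    by (simp add: d3 d4 field_simps)
qed

lemma L_coordinates: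
  assumes "x \<in> L n"
  obtains a b e :: int where "x = of_int a + of_int b * tau + of_int e * (tau - 1)"
    and "\<bar>a\<bar> + 2 * \<bar>b\<bar> + 2 * \<bar>e\<bar> \<le> int n"
proof -
  from assms obtain c :: "nat \<Rightarrow> nat" where c_sum: "(\<Sum>j<10. c j) \<le> n"
    and x: "complex_of_real x = (\<Sum>j<10. of_nat (c j) * xi ^ j)"
    unfolding L_def by blast
  define d where "d j = int (c j) - int (c (j + 5))" for j
  have "complex_of_real x = (\<Sum>j<5. of_int (d j) * xi ^ j)"
    using x sum_powers_antiperiodic[OF xi_power_5, of "\<lambda>j. of_nat (c j)"]
    by (simp add: d_def)
  note d = real_int_combination_xi_powers[OF this]
  have "(\<Sum>j<5. \<bar>d j\<bar>) \<le> int (\<Sum>j<10. c j)"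
    using sum_abs_diff_shift_le[where m = 5 and c = c] unfolding d_def by simp
  also have "\<dots> \<le> int n"
    using c_sum by (simp only: of_nat_le_iff)
  finally have "\<bar>d 0\<bar> + 2 * \<bar>d 1\<bar> + 2 * \<bar>d 2\<bar> \<le> int n"
    using d(1,2) by (simp add: lessThan_nat_numeral)
  with d(3) show ?thesis
    by (rule that)
qed

lemma abs_lincomb_le:
  fixes a b e u v :: real
  assumes "\<bar>u\<bar> \<le> 2" "\<bar>v\<bar> \<le> 2"
  shows "\<bar>a + u * b + v * e\<bar> \<le> \<bar>a\<bar> + 2 * \<bar>b\<bar> + 2 * \<bar>e\<bar>"
proof -
  have "\<bar>u * b\<bar> \<le> 2 * \<bar>b\<bar>" "\<bar>v * e\<bar> \<le> 2 * \<bar>e\<bar>"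
    using assms by (simp_all add: abs_mult mult_right_mono)
  then show ?thesis
    using abs_triangle_ineq[of a "u * b"] abs_triangle_ineq[of "a + u * b" "v * e"] by linarith
qed

lemma tau_combination_bounds:
  fixes a b e :: int
  assumes x: "x = of_int a + of_int b * tau + of_int e * (tau - 1)"
    and bound: "\<bar>a\<bar> + 2 * \<bar>b\<bar> + 2 * \<bar>e\<bar> \<le> int n"
  shows "x \<in> Ztau" "\<bar>x\<bar> \<le> real n" "\<bar>qconj x\<bar> \<le> real n"
proof -
  have x_Ztau: "x = of_int (a - e) + of_int (b + e) * tau"
    using x by (simp add: algebra_simps)
  then show "x \<in> Ztau"
    unfolding Ztau_def by blast
  have "\<bar>tau\<bar> \<le> 2" "\<bar>tau - 1\<bar> \<le> 2" "\<bar>1 - tau\<bar> \<le> 2" "\<bar>- tau\<bar> \<le> 2"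
    using tau_bounds by auto
  moreover have "\<bar>real_of_int a\<bar> + 2 * \<bar>of_int b\<bar> + 2 * \<bar>of_int e\<bar> \<le> real n"
    using bound by linarith
  moreover have "x = of_int a + tau * of_int b + (tau - 1) * of_int e"
    using x by (simp add: algebra_simps)
  moreover have "qconj x = of_int a + (1 - tau) * of_int b + (- tau) * of_int e"
    unfolding x_Ztau qconj_Ztau by (simp add: algebra_simps)
  ultimately show "\<bar>x\<bar> \<le> real n" "\<bar>qconj x\<bar> \<le> real n"
    using abs_lincomb_le order_trans by metis+
qed

theorem proposition6p9:
  fixes n :: nat
  assumes "n \<ge> 1"
  shows "L n \<subseteq> Sigma_qc {- real n .. real n} \<inter> {- real n .. real n}"
proof
  fix x
  assume "x \<in> L n"
  then obtain a b e :: int where "x = of_int a + of_int b * tau + of_int e * (tau - 1)"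
    and "\<bar>a\<bar> + 2 * \<bar>b\<bar> + 2 * \<bar>e\<bar> \<le> int n"
    by (rule L_coordinates)
  note x = tau_combination_bounds[OF this]
  show "x \<in> Sigma_qc {- real n .. real n} \<inter> {- real n .. real n}"
    using x unfolding Sigma_qc_def by (simp add: abs_le_iff)
qed

end
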